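(* Let $0<p<1$ and let $\mathcal O(D_p)$ be the universal complex $*$-algebra generated by one element $x$ subject to $x^*x-pxx^*=1-p$. Put $X:=1-xx^*$, and for $n\in\mathbb N$ write $x^{-n}:=(x^* )^n$. Then for all $\mu,\nu\in\mathbb Z$, $$x^\mu x^\nu=(1+\mathcal Q^p_{\mu;\nu}(X))\,x^{\mu+\nu}.$$
   Context: For real $r>0$ and $n\ge1$, $Q^r_n(Y)=\sum_{m=1}^n(-1)^m r^{-nm+\frac{m(m+1)}{2}}\binom{n}{m}_{r}Y^m$, where $[0]_r=0$, $[n]_r=1+r+\dots+r^{n-1}$, $[n]_r!=[1]_r\cdots[n]_r$, $[0]_r!=1$, $\binom{n}{m}_r=\frac{[n]_r!}{[m]_r![n-m]_r!}$. For $\mu\in\mathbb Z$: $\mathcal Q^p_\mu=Q^p_\mu$ if $\mu>0$, $\mathcal Q^p_0=0$, $\mathcal Q^p_\mu(Y)=Q^{p^{-1}}_{-\mu}(pY)$ if $\mu<0$. For $\mu,\nu\in\mathbb Z$: $\mathcal Q^p_{\mu;\nu}=0$ if $\mu\nu\ge0$; $\mathcal Q^p_{\mu;\nu}(Y)=\mathcal Q^p_\mu(Y)$ if $\mu\nu<0$ and $|\mu|\le|\nu|$; $\mathcal Q^p_{\mu;\nu}(Y)=\mathcal Q^p_{-\nu}(p^{-(\mu+\nu)}Y)$ if $\mu\nu<0$ and $|\mu|>|\nu|$. *)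

theory Defs
  imports Complex_Main
begin

definition cstar_alg :: "(complex \<Rightarrow> 'a::ring_1 \<Rightarrow> 'a) \<Rightarrow> ('a \<Rightarrow> 'a) \<Rightarrow> bool" where
  "cstar_alg sm st \<longleftrightarrow>
     (\<forall>a b u v. sm a (u + v) = sm a u + sm a v
        \<and> sm (a + b) u = sm a u + sm b u
        \<and> sm a (sm b u) = sm (a * b) u
        \<and> sm 1 u = u
        \<and> sm a (u * v) = sm a u * v
        \<and> sm a (u * v) = u * sm a v
        \<and> st (u + v) = st u + st v
        \<and> st (sm a u) = sm (cnj a) (st u)
        \<and> st (u * v) = st v * st u
        \<and> st (st u) = u)"

definition qint :: "real \<Rightarrow> nat \<Rightarrow> real" where
  "qint r n = (\<Sum>i<n. r ^ i)"

definition qfact :: "real \<Rightarrow> nat \<Rightarrow> real" where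
  "qfact r n = (\<Prod>i=1..n. qint r i)"

definition qbinom :: "real \<Rightarrow> nat \<Rightarrow> nat \<Rightarrow> real" where
  "qbinom r n m = qfact r n / (qfact r m * qfact r (n - m))"

definition Qpol :: "(complex \<Rightarrow> 'a::ring_1 \<Rightarrow> 'a) \<Rightarrow> real \<Rightarrow> nat \<Rightarrow> 'a \<Rightarrow> 'a" where
  "Qpol sm r n Y = (\<Sum>m=1..n. sm (complex_of_real
      ((-1) ^ m * r powi (int (m * (m + 1) div 2) - int n * int m) * qbinom r n m)) (Y ^ m))"

definition calQ :: "(complex \<Rightarrow> 'a::ring_1 \<Rightarrow> 'a) \<Rightarrow> real \<Rightarrow> int \<Rightarrow> 'a \<Rightarrow> 'a" where
  "calQ sm p \<mu> Y =
     (if \<mu> > 0 then Qpol sm p (nat \<mu>) Y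
      else if \<mu> = 0 then 0
      else Qpol sm (inverse p) (nat (- \<mu>)) (sm (complex_of_real p) Y))"

definition calQ2 :: "(complex \<Rightarrow> 'a::ring_1 \<Rightarrow> 'a) \<Rightarrow> real \<Rightarrow> int \<Rightarrow> int \<Rightarrow> 'a \<Rightarrow> 'a" where
  "calQ2 sm p \<mu> \<nu> Y =
     (if \<mu> * \<nu> \<ge> 0 then 0
      else if \<bar>\<mu>\<bar> \<le> \<bar>\<nu>\<bar> then calQ sm p \<mu> Y
      else calQ sm p (- \<nu>) (sm (complex_of_real (p powi (- (\<mu> + \<nu>)))) Y))"

definition xpow :: "('a::ring_1 \<Rightarrow> 'a) \<Rightarrow> 'a \<Rightarrow> int \<Rightarrow> 'a" where
  "xpow st x \<mu> = (if \<mu> \<ge> 0 then x ^ nat \<mu> else (st x) ^ nat (- \<mu>))"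

end

theory Submission
  imports Defs
begin

text \<open>By the q-Pascal rule, 1 + Q^r_n(Y) is the product of the factors (1 - r^(-i) Y) for i < n,
  i.e. it obeys the recursion P(m+1) = P(m) - r^(-m) Y P(m), P(0) = 1. Because x X = p^(-1) X x
  and x* X = p X x*, the products x^m (x*)^m and (x*)^m x^m obey this recursion with (r, Y) = (p, X),
  resp. (1/p, pX). A mixed product x^\<mu> x^\<nu> reduces to these by splitting off the common power
  and moving the remaining power x^(\<plusminus>k) past X, which rescales X by p^(\<mp>k).\<close>

lemma qint_pos: "r > 0 \<Longrightarrow> n \<ge> 1 \<Longrightarrow> qint r n > 0"
  unfolding qint_def by (intro sum_pos) (auto simp: lessThan_empty_iff)

lemma qint_add: "qint r (k + m) = qint r k + r ^ k * qint r m"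
  by (induction m) (simp_all add: qint_def algebra_simps power_add)

lemma qfact_0 [simp]: "qfact r 0 = 1"
  unfolding qfact_def by simp

lemma qfact_Suc: "qfact r (Suc n) = qfact r n * qint r (Suc n)"
  unfolding qfact_def by simp

lemma qfact_pos: "r > 0 \<Longrightarrow> qfact r n > 0"
  unfolding qfact_def by (intro prod_pos) (auto intro: qint_pos)

lemma qbinom_0 [simp]: "r > 0 \<Longrightarrow> qbinom r n 0 = 1"
  using qfact_pos[of r n] by (simp add: qbinom_def)

lemma qbinom_self [simp]: "r > 0 \<Longrightarrow> qbinom r n n = 1"
  using qfact_pos[of r n] by (simp add: qbinom_def)

lemma qbinom_Suc_Suc:
  assumes r: "r > 0" and "j < n"
  shows "qbinom r (Suc n) (Suc j) = r ^ Suc j * qbinom r n (Suc j) + qbinom r n j"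
proof -
  obtain m where n: "n = Suc j + m"
    using \<open>j < n\<close> by (metis less_imp_Suc_add add_Suc)
  have qint: "qint r (Suc n) = qint r (Suc j) + r ^ Suc j * qint r (Suc m)"
    using qint_add[of r "Suc j" "Suc m"] n by simp
  have diffs: "Suc n - Suc j = Suc m" "n - Suc j = m" "n - j = Suc m"
    using n by auto
  have "qfact r j > 0" "qfact r m > 0" "qfact r n > 0" "qint r (Suc j) > 0" "qint r (Suc m) > 0"
    using qfact_pos[OF r] qint_pos[OF r] by auto
  then show ?thesis
    using n unfolding qbinom_def diffs qfact_Suc qint by (simp add: field_simps)
qed

definition Qcoeff :: "real \<Rightarrow> nat \<Rightarrow> nat \<Rightarrow> real" where
  "Qcoeff r n k = (if k \<le> n
     then (-1) ^ k * r powi (int (k * (k + 1) div 2) - int n * int k) * qbinom r n k else 0)"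

lemma triangular_Suc: "int (Suc j * (Suc j + 1) div 2) = int (j * (j + 1) div 2) + int j + 1"
proof -
  have "Suc j * (Suc j + 1) = j * (j + 1) + 2 * (j + 1)" by simp
  then show ?thesis by simp
qed

text \<open>Coefficientwise form of 1 + Q^r_(n+1)(Y) = (1 + Q^r_n(Y)) (1 - r^(-n) Y).\<close>
lemma Qcoeff_Suc:
  assumes r: "r > 0"
  shows "Qcoeff r (Suc n) k
           = Qcoeff r n k - (if k = 0 then 0 else inverse r ^ n * Qcoeff r n (k - 1))"
proof (cases k)
  case 0
  then show ?thesis using r by (simp add: Qcoeff_def)
next
  case (Suc j)
  show ?thesis
  proof (cases "j \<le> n")
    case False
    then show ?thesis using Suc by (simp add: Qcoeff_def)
  next
    case True
    define E where "E = r powi (int (Suc j * (Suc j + 1) div 2) - int (Suc n) * int (Suc j))"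
    have exp_n: "r powi (int (Suc j * (Suc j + 1) div 2) - int n * int (Suc j)) = E * r ^ Suc j"
    proof -
      have "int (Suc j * (Suc j + 1) div 2) - int n * int (Suc j)
          = (int (Suc j * (Suc j + 1) div 2) - int (Suc n) * int (Suc j)) + int (Suc j)"
        by (simp add: algebra_simps)
      then show ?thesis
        using r unfolding E_def by (metis power_int_add power_int_of_nat less_irrefl)
    qed
    have exp_pred: "inverse r ^ n * r powi (int (j * (j + 1) div 2) - int n * int j) = E"
    proof -
      have "int (j * (j + 1) div 2) - int n * int j
          = (int (Suc j * (Suc j + 1) div 2) - int (Suc n) * int (Suc j)) + int n"
        unfolding triangular_Suc by (simp add: algebra_simps)
      then have "r powi (int (j * (j + 1) div 2) - int n * int j) = E * r ^ n"
        using r unfolding E_def by (metis power_int_add power_int_of_nat less_irrefl)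
      then show ?thesis using r by (simp add: power_inverse field_simps)
    qed
    have pascal: "qbinom r (Suc n) (Suc j)
        = r ^ Suc j * (if Suc j \<le> n then qbinom r n (Suc j) else 0) + qbinom r n j"
      using qbinom_Suc_Suc[OF r, of j n] True r by (cases "j = n") auto
    have lhs: "Qcoeff r (Suc n) k = (-1) ^ Suc j * E * qbinom r (Suc n) (Suc j)"
      using Suc True by (simp add: Qcoeff_def E_def)
    have pred: "inverse r ^ n * Qcoeff r n (k - 1) = (-1) ^ j * E * qbinom r n j"
      using Suc True exp_pred[symmetric] by (simp add: Qcoeff_def)
    have same: "Qcoeff r n k
        = (-1) ^ Suc j * (E * r ^ Suc j) * (if Suc j \<le> n then qbinom r n (Suc j) else 0)"
      using Suc exp_n by (simp add: Qcoeff_def)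
    show ?thesis
      unfolding lhs pred same pascal using Suc by (simp add: algebra_simps)
  qed
qed

locale star_algebra =
  fixes sm :: "complex \<Rightarrow> 'a::ring_1 \<Rightarrow> 'a" and st :: "'a \<Rightarrow> 'a"
  assumes cstar_alg: "cstar_alg sm st"
begin

lemma sm_add_right: "sm a (u + v) = sm a u + sm a v"
  and sm_add_left: "sm (a + b) u = sm a u + sm b u"
  and sm_sm: "sm a (sm b u) = sm (a * b) u"
  and sm_one: "sm 1 u = u"
  and sm_mult_left: "sm a u * v = sm a (u * v)"
  and sm_mult_right: "u * sm a v = sm a (u * v)"
  using cstar_alg unfolding cstar_alg_def by metis+

lemma sm_zero_left: "sm 0 u = 0"
  using sm_add_left[of 0 0 u] by simp

lemma sm_zero_right: "sm a 0 = 0"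
  using sm_add_right[of a 0 0] by simp

lemma sm_diff_right: "sm a (u - v) = sm a u - sm a v"
  using sm_add_right[of a "u - v" v] by (simp add: eq_diff_eq)

lemma sm_diff_left: "sm (a - b) u = sm a u - sm b u"
  using sm_add_left[of "a - b" b u] by (simp add: eq_diff_eq)

lemma sm_sum_right: "sm a (sum f A) = (\<Sum>i\<in>A. sm a (f i))"
  by (induction A rule: infinite_finite_induct) (simp_all add: sm_zero_right sm_add_right)

lemma one_plus_Qpol_eq_Qcoeff_sum:
  assumes "r > 0"
  shows "1 + Qpol sm r n Y = (\<Sum>k\<le>n. sm (of_real (Qcoeff r n k)) (Y ^ k))"
proof -
  have "{..n} = insert 0 {1..n}" by auto
  then have "(\<Sum>k\<le>n. sm (of_real (Qcoeff r n k)) (Y ^ k))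
      = sm (of_real (Qcoeff r n 0)) 1 + (\<Sum>k=1..n. sm (of_real (Qcoeff r n k)) (Y ^ k))"
    by simp
  also have "sm (of_real (Qcoeff r n 0)) 1 = 1"
    using assms by (simp add: Qcoeff_def sm_one)
  also have "(\<Sum>k=1..n. sm (of_real (Qcoeff r n k)) (Y ^ k)) = Qpol sm r n Y"
    unfolding Qpol_def by (rule sum.cong) (auto simp: Qcoeff_def)
  finally show ?thesis by simp
qed

lemma one_plus_Qpol_Suc:
  assumes r: "r > 0"
  shows "1 + Qpol sm r (Suc n) Y
           = (1 + Qpol sm r n Y) - sm (of_real (inverse r ^ n)) (Y * (1 + Qpol sm r n Y))"
proof -
  define c where "c n k = sm (of_real (Qcoeff r n k)) (Y ^ k)" for n k
  define d where "d k = (if k = 0 then 0 else inverse r ^ n * Qcoeff r n (k - 1))" for k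
  have "1 + Qpol sm r (Suc n) Y = (\<Sum>k\<le>Suc n. c n k) - (\<Sum>k\<le>Suc n. sm (of_real (d k)) (Y ^ k))"
    unfolding one_plus_Qpol_eq_Qcoeff_sum[OF r] c_def Qcoeff_Suc[OF r] d_def[symmetric]
    by (simp add: sm_diff_left sum_subtractf)
  also have "(\<Sum>k\<le>Suc n. c n k) = 1 + Qpol sm r n Y"
    by (simp add: c_def Qcoeff_def sm_zero_left one_plus_Qpol_eq_Qcoeff_sum[OF r])
  also have "(\<Sum>k\<le>Suc n. sm (of_real (d k)) (Y ^ k)) = (\<Sum>k\<le>n. sm (of_real (d (Suc k))) (Y ^ Suc k))"
    by (subst sum.atMost_Suc_shift) (simp add: d_def sm_zero_left)
  also have "\<dots> = sm (of_real (inverse r ^ n)) (Y * (1 + Qpol sm r n Y))"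
    unfolding one_plus_Qpol_eq_Qcoeff_sum[OF r] sum_distrib_left sm_sum_right
    by (rule sum.cong) (simp_all add: d_def sm_mult_right sm_sm)
  finally show ?thesis .
qed

lemma Qpol_commute:
  assumes "z * Y = Y' * z"
  shows "z * Qpol sm r n Y = Qpol sm r n Y' * z"
proof -
  have "z * Y ^ m = Y' ^ m * z" for m
    using assms by (induction m) (simp_all add: mult.assoc flip: power_Suc2, metis mult.assoc)
  then show ?thesis
    unfolding Qpol_def sum_distrib_left sum_distrib_right
    by (simp add: sm_mult_right sm_mult_left)
qed

lemma pow_mult_sm_commute:
  assumes "z * Y = sm c Y * z"
  shows "z ^ k * sm a Y = sm (a * c ^ k) Y * z ^ k"
proof (induction k)
  case 0
  then show ?case by simp
next
  case (Suc k)
  have "z ^ Suc k * sm a Y = z * sm (a * c ^ k) Y * z ^ k"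
    by (simp add: mult.assoc Suc)
  also have "z * sm (a * c ^ k) Y = sm (a * c ^ Suc k) Y * z"
    by (simp add: sm_mult_right sm_mult_left assms sm_sm algebra_simps)
  finally show ?case by (simp add: mult.assoc flip: power_Suc2)
qed

end

lemma xpow_mult_same_sign:
  assumes "\<mu> * \<nu> \<ge> 0"
  shows "xpow st x \<mu> * xpow st x \<nu> = xpow st x (\<mu> + \<nu>)"
proof -
  have "(\<mu> \<ge> 0 \<and> \<nu> \<ge> 0) \<or> (\<mu> \<le> 0 \<and> \<nu> \<le> 0)"
    using assms by (metis linorder_not_le mult_pos_neg mult_neg_pos less_le_not_le)
  moreover have "\<mu> \<le> 0 \<Longrightarrow> \<nu> \<le> 0 \<Longrightarrow> nat (- \<mu> - \<nu>) = nat (- \<mu>) + nat (- \<nu>)"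
    by simp
  ultimately show ?thesis
    by (auto simp: xpow_def nat_add_distrib power_add)
qed

locale quantum_disc = star_algebra +
  fixes x :: "'a::ring_1" and p :: real
  assumes p_pos: "0 < p"
    and disc_relation: "st x * x - sm (of_real p) (x * st x) = sm (of_real (1 - p)) 1"
begin

definition X :: 'a where "X = 1 - x * st x"

lemma star_mult_self: "st x * x = 1 - sm (of_real p) X"
proof -
  have "st x * x = sm (of_real p) (x * st x) + sm (of_real (1 - p)) 1"
    using disc_relation by (simp add: algebra_simps)
  also have "\<dots> = 1 - sm (of_real p) X"
    unfolding X_def by (simp add: sm_diff_right sm_diff_left sm_one)
  finally show ?thesis .
qed

lemma x_mult_X: "x * X = sm (of_real (inverse p)) X * x"
proof -
  have "X * x = x - x * (st x * x)"
    unfolding X_def by (simp add: algebra_simps)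
  also have "\<dots> = sm (of_real p) (x * X)"
    unfolding star_mult_self by (simp add: algebra_simps sm_mult_right)
  finally show ?thesis
    using p_pos by (simp add: sm_mult_left sm_sm sm_one)
qed

lemma star_mult_X: "st x * X = sm (of_real p) X * st x"
proof -
  have "st x * X = st x - (st x * x) * st x"
    unfolding X_def by (simp add: algebra_simps)
  then show ?thesis
    unfolding star_mult_self by (simp add: algebra_simps)
qed

lemma x_pow_mult_X: "x ^ k * X = sm (of_real (inverse p ^ k)) X * x ^ k"
  using pow_mult_sm_commute[OF x_mult_X, of k 1] by (simp add: sm_one)

lemma star_pow_mult_X: "st x ^ k * sm (of_real a) X = sm (of_real (a * p ^ k)) X * st x ^ k"
  using pow_mult_sm_commute[OF star_mult_X] by simp

lemma x_pow_mult_star_pow_same: "x ^ m * st x ^ m = 1 + Qpol sm p m X"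
proof (induction m)
  case 0
  then show ?case by (simp add: Qpol_def)
next
  case (Suc m)
  have "x ^ Suc m * st x ^ Suc m = x ^ m * (x * st x) * st x ^ m"
    by (simp only: power_Suc2[of x] power_Suc[of "st x"] mult.assoc)
  also have "\<dots> = x ^ m * st x ^ m - (x ^ m * X) * st x ^ m"
    unfolding X_def by (simp add: algebra_simps)
  also have "\<dots> = 1 + Qpol sm p (Suc m) X"
    unfolding one_plus_Qpol_Suc[OF p_pos] x_pow_mult_X Suc[symmetric]
    by (simp add: sm_mult_left mult.assoc)
  finally show ?case .
qed

lemma star_pow_mult_x_pow_same: "st x ^ m * x ^ m = 1 + Qpol sm (inverse p) m (sm (of_real p) X)"
proof (induction m)
  case 0
  then show ?case by (simp add: Qpol_def)
next
  case (Suc m)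
  have "st x ^ Suc m * x ^ Suc m = st x ^ m * (st x * x) * x ^ m"
    by (simp only: power_Suc2[of "st x"] power_Suc[of x] mult.assoc)
  also have "\<dots> = st x ^ m * x ^ m - (st x ^ m * sm (of_real p) X) * x ^ m"
    unfolding star_mult_self by (simp add: algebra_simps)
  also have "\<dots> = 1 + Qpol sm (inverse p) (Suc m) (sm (of_real p) X)"
    using p_pos
    unfolding one_plus_Qpol_Suc[OF positive_imp_inverse_positive[OF p_pos]]
      star_pow_mult_X Suc[symmetric]
    by (simp add: sm_mult_left sm_mult_right sm_sm mult.assoc mult.commute)
  finally show ?case .
qed

lemma x_pow_mult_star_pow:
  assumes "m > 0" "n > 0"
  shows "x ^ m * st x ^ n = (1 + calQ2 sm p (int m) (- int n) X) * xpow st x (int m - int n)"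
proof (cases "m \<le> n")
  case True
  have "x ^ m * st x ^ n = (x ^ m * st x ^ m) * st x ^ (n - m)"
    using True by (simp add: mult.assoc flip: power_add)
  moreover have "calQ2 sm p (int m) (- int n) X = Qpol sm p m X"
    using assms True by (simp add: calQ2_def calQ_def mult_le_0_iff)
  ultimately show ?thesis
    using True by (simp add: x_pow_mult_star_pow_same xpow_def nat_diff_distrib)
next
  case False
  have "x ^ m = x ^ (m - n) * x ^ n"
    using False by (simp flip: power_add)
  then have "x ^ m * st x ^ n = x ^ (m - n) * (x ^ n * st x ^ n)"
    by (simp add: mult.assoc)
  also have "\<dots> = (1 + Qpol sm p n (sm (of_real (inverse p ^ (m - n))) X)) * x ^ (m - n)"
    using Qpol_commute[OF x_pow_mult_X]
    by (simp add: x_pow_mult_star_pow_same algebra_simps)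
  moreover have "- (int m + - int n) = - int (m - n)"
    using False by simp
  then have "p powi (- (int m + - int n)) = inverse p ^ (m - n)"
    by (simp only: power_int_minus power_int_of_nat power_inverse)
  then have "calQ2 sm p (int m) (- int n) X = Qpol sm p n (sm (of_real (inverse p ^ (m - n))) X)"
    using assms False by (simp add: calQ2_def calQ_def mult_le_0_iff)
  ultimately show ?thesis
    using False by (simp add: xpow_def nat_diff_distrib)
qed

lemma star_pow_mult_x_pow:
  assumes "m > 0" "n > 0"
  shows "st x ^ m * x ^ n = (1 + calQ2 sm p (- int m) (int n) X) * xpow st x (int n - int m)"
proof (cases "m \<le> n")
  case True
  have "st x ^ m * x ^ n = (st x ^ m * x ^ m) * x ^ (n - m)"
    using True by (simp add: mult.assoc flip: power_add)
  moreover have "calQ2 sm p (- int m) (int n) X = Qpol sm (inverse p) m (sm (of_real p) X)"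
    using assms True by (simp add: calQ2_def calQ_def mult_le_0_iff)
  ultimately show ?thesis
    using True by (simp add: star_pow_mult_x_pow_same xpow_def nat_diff_distrib)
next
  case False
  have "st x ^ m = st x ^ (m - n) * st x ^ n"
    using False by (simp flip: power_add)
  then have "st x ^ m * x ^ n = st x ^ (m - n) * (st x ^ n * x ^ n)"
    by (simp add: mult.assoc)
  also have "\<dots> = (1 + Qpol sm (inverse p) n (sm (of_real (p * p ^ (m - n))) X)) * st x ^ (m - n)"
    using Qpol_commute[OF star_pow_mult_X[of "m - n" p]]
    by (simp add: star_pow_mult_x_pow_same algebra_simps)
  moreover have "- (- int m + int n) = int (m - n)"
    using False by simp
  then have "p powi (- (- int m + int n)) = p ^ (m - n)"
    by (simp only: power_int_of_nat)
  then have "calQ2 sm p (- int m) (int n) X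
      = Qpol sm (inverse p) n (sm (of_real (p * p ^ (m - n))) X)"
    using assms False by (simp add: calQ2_def calQ_def mult_le_0_iff sm_sm)
  ultimately show ?thesis
    using False by (simp add: xpow_def nat_diff_distrib)
qed

end

theorem mainTheorem6:
  fixes sm :: "complex \<Rightarrow> 'a::ring_1 \<Rightarrow> 'a" and st :: "'a \<Rightarrow> 'a"
    and x :: 'a and p :: real
  assumes "cstar_alg sm st"
    and "0 < p" and "p < 1"
    and "st x * x - sm (complex_of_real p) (x * st x) = sm (complex_of_real (1 - p)) 1"
  shows "\<forall>\<mu> \<nu> :: int. xpow st x \<mu> * xpow st x \<nu>
           = (1 + calQ2 sm p \<mu> \<nu> (1 - x * st x)) * xpow st x (\<mu> + \<nu>)"
proof (intro allI)
  fix \<mu> \<nu> :: int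
  interpret quantum_disc sm st x p
    using assms(1,2,4) by unfold_locales
  have X: "1 - x * st x = X"
    by (simp add: X_def)
  consider "\<mu> * \<nu> \<ge> 0" | "\<mu> > 0" "\<nu> < 0" | "\<mu> < 0" "\<nu> > 0"
    by (metis linorder_not_le mult_nonneg_nonneg mult_nonpos_nonpos less_imp_le)
  then show "xpow st x \<mu> * xpow st x \<nu> = (1 + calQ2 sm p \<mu> \<nu> (1 - x * st x)) * xpow st x (\<mu> + \<nu>)"
  proof cases
    case 1
    then show ?thesis by (simp add: xpow_mult_same_sign calQ2_def)
  next
    case 2
    then show ?thesis
      using x_pow_mult_star_pow[of "nat \<mu>" "nat (- \<nu>)"] by (simp add: xpow_def X)
  next
    case 3
    then show ?thesis
      using star_pow_mult_x_pow[of "nat (- \<mu>)" "nat \<nu>"] by (simp add: xpow_def X add.commute)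
  qed
qed

end
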